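(* Let $b_1,b_2\in\mathbb{R}$ satisfy $b_1>0$, $3b_1+b_2<0$ and $6b_1+b_2>0$, let $\phi$ be as below, $g(p)=p+\phi(p)$, and set $u_-=1-\alpha_0$, $u_0=1/2$, $u_+=\alpha_0$. Then: (G1) $g(u_+-\delta)+g(u_-+\delta)=2u_0$ for all $\delta$; (G2) $g'(u_0)>1$ and $g'(u_-)=g'(u_+)<1$; (G3) $g''(p)>0$ for $p\in(u_-,u_0)$ and $g''(p)<0$ for $p\in(u_0,u_+)$.
   Context: $\phi(p)=b_1p(1-p)^4+b_2p^2(1-p)^3-b_2p^3(1-p)^2-b_1p^4(1-p)$; $\alpha_0=1/2+\beta_0$ with $\beta_0=\frac{\sqrt{-(b_1-b_2)(3b_1+b_2)}}{2(b_1-b_2)}$, so that $1-\alpha_0<1/2<\alpha_0$ are the roots of $\phi$ in $(0,1)$ other than $1/2$. *)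

theory Defs
  imports "HOL-Analysis.Analysis"
begin

definition phi :: "real \<Rightarrow> real \<Rightarrow> real \<Rightarrow> real" where
  "phi b1 b2 p = b1 * p * (1 - p)^4 + b2 * p^2 * (1 - p)^3 - b2 * p^3 * (1 - p)^2 - b1 * p^4 * (1 - p)"

definition beta0 :: "real \<Rightarrow> real \<Rightarrow> real" where
  "beta0 b1 b2 = sqrt (- (b1 - b2) * (3 * b1 + b2)) / (2 * (b1 - b2))"

definition alpha0 :: "real \<Rightarrow> real \<Rightarrow> real" where
  "alpha0 b1 b2 = 1/2 + beta0 b1 b2"

definition gmap :: "real \<Rightarrow> real \<Rightarrow> real \<Rightarrow> real" where
  "gmap b1 b2 p = p + phi b1 b2 p"

end

theory Submission
  imports Defs
begin

text \<open>In the variable \<open>x = p - 1/2\<close> the map \<open>g\<close> is \<open>1/2\<close> plus an odd quintic in \<open>x\<close>, whence the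
  point symmetry (G1) and the evenness of \<open>g'\<close>. The roots \<open>1/2 \<plusminus> \<beta>\<^sub>0\<close> of \<open>\<phi>\<close> are characterised by
  \<open>(b\<^sub>1 - b\<^sub>2) \<beta>\<^sub>0\<^sup>2 = -(3b\<^sub>1 + b\<^sub>2)/4\<close>; substituting this gives \<open>g'(\<alpha>\<^sub>0) = 1 + b\<^sub>1(3b\<^sub>1 + b\<^sub>2)/(b\<^sub>1 - b\<^sub>2) < 1\<close>
  and shows that the second factor of \<open>g'' = x (6(b\<^sub>1 + b\<^sub>2) + 40(b\<^sub>1 - b\<^sub>2) x\<^sup>2)\<close> stays below
  \<open>-4(6b\<^sub>1 + b\<^sub>2) < 0\<close> for \<open>|x| < \<beta>\<^sub>0\<close>, so \<open>g''\<close> has the sign of \<open>-x\<close> there.\<close>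

lemma gmap_centered:
  "gmap b1 b2 p = p - (3*b1 + b2)/8 * (p - 1/2) + (b1 + b2) * (p - 1/2)^3 + 2*(b1 - b2) * (p - 1/2)^5"
  unfolding gmap_def phi_def by (simp add: field_simps power_def numeral_eq_Suc)

lemma gmap_reflect: "gmap b1 b2 (1 - p) + gmap b1 b2 p = 1"
  unfolding gmap_centered by (simp add: field_simps power_def numeral_eq_Suc)

lemma deriv_gmap:
  "deriv (gmap b1 b2) =
     (\<lambda>p. 1 - (3*b1 + b2)/8 + 3*(b1 + b2) * (p - 1/2)^2 + 10*(b1 - b2) * (p - 1/2)^4)"
proof
  fix p
  have "(gmap b1 b2 has_real_derivative
          1 - (3*b1 + b2)/8 + 3*(b1 + b2) * (p - 1/2)^2 + 10*(b1 - b2) * (p - 1/2)^4) (at p)"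
    unfolding gmap_centered[abs_def]
    by (rule derivative_eq_intros refl)+ (simp add: algebra_simps)
  then show "deriv (gmap b1 b2) p = 1 - (3*b1 + b2)/8 + 3*(b1 + b2) * (p - 1/2)^2 + 10*(b1 - b2) * (p - 1/2)^4"
    by (rule DERIV_imp_deriv)
qed

lemma deriv_deriv_gmap:
  "deriv (deriv (gmap b1 b2)) = (\<lambda>p. (p - 1/2) * (6*(b1 + b2) + 40*(b1 - b2) * (p - 1/2)^2))"
proof
  fix p
  have "(deriv (gmap b1 b2) has_real_derivative (p - 1/2) * (6*(b1 + b2) + 40*(b1 - b2) * (p - 1/2)^2)) (at p)"
    unfolding deriv_gmap
    by (rule derivative_eq_intros refl)+ (simp add: algebra_simps power_def numeral_eq_Suc)
  then show "deriv (deriv (gmap b1 b2)) p = (p - 1/2) * (6*(b1 + b2) + 40*(b1 - b2) * (p - 1/2)^2)"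
    by (rule DERIV_imp_deriv)
qed

lemma deriv_gmap_reflect: "deriv (gmap b1 b2) (1 - p) = deriv (gmap b1 b2) p"
proof -
  have "1 - p - 1/2 = - (p - 1/2)" by simp
  then show ?thesis unfolding deriv_gmap by (simp only: power_minus_even even_numeral)
qed

lemma deriv_gmap_center: "deriv (gmap b1 b2) (1/2) = 1 - (3*b1 + b2)/8"
  unfolding deriv_gmap by simp

lemma beta0_pos:
  assumes "b1 > b2" and "3*b1 + b2 < 0"
  shows "beta0 b1 b2 > 0"
proof -
  have "(b2 - b1) * (3*b1 + b2) > 0" using assms by (intro mult_neg_neg) auto
  then show ?thesis unfolding beta0_def using assms by simp
qed

lemma beta0_squared:
  assumes "b1 > b2" and "3*b1 + b2 < 0"
  shows "(b1 - b2) * (beta0 b1 b2)^2 = -(3*b1 + b2)/4"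
proof -
  define B c where "B = b1 - b2" and "c = 3*b1 + b2"
  have "B > 0" "c < 0" using assms unfolding B_def c_def by simp_all
  then have "(beta0 b1 b2)^2 = - B * c / (4 * B^2)"
    unfolding beta0_def B_def[symmetric] c_def[symmetric]
    by (simp add: power_divide mult_pos_neg less_imp_le power_mult_distrib)
  then show ?thesis using \<open>B > 0\<close> unfolding B_def[symmetric] c_def[symmetric]
    by (simp add: field_simps power2_eq_square)
qed

lemma deriv_gmap_alpha0:
  assumes "b1 > b2" and "3*b1 + b2 < 0"
  shows "deriv (gmap b1 b2) (alpha0 b1 b2) = 1 + b1 * (3*b1 + b2) / (b1 - b2)"
proof -
  define s where "s = (beta0 b1 b2)^2"
  have sq: "(b1 - b2) * s = -(3*b1 + b2)/4"
    unfolding s_def using assms by (rule beta0_squared)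
  have "(b1 - b2) * deriv (gmap b1 b2) (alpha0 b1 b2)
          = (b1 - b2) * (1 - (3*b1 + b2)/8) + 3*(b1 + b2) * ((b1 - b2) * s) + 10 * ((b1 - b2) * s)^2"
    unfolding deriv_gmap alpha0_def s_def by (simp add: algebra_simps power2_eq_square power4_eq_xxxx)
  also have "\<dots> = (b1 - b2) + b1 * (3*b1 + b2)"
    unfolding sq by (simp add: field_simps power2_eq_square)
  finally show ?thesis using assms(1) by (simp add: field_simps)
qed

lemma curvature_factor_neg:
  assumes "b1 > b2" and "3*b1 + b2 < 0" and "6*b1 + b2 > 0"
    and "\<bar>p - 1/2\<bar> < beta0 b1 b2"
  shows "6*(b1 + b2) + 40*(b1 - b2) * (p - 1/2)^2 < 0"
proof -
  have "(p - 1/2)^2 < (beta0 b1 b2)^2"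
    using assms(4) by (metis abs_ge_zero less_le_trans power2_abs power_strict_mono zero_less_numeral)
  then have "(b1 - b2) * (p - 1/2)^2 < -(3*b1 + b2)/4"
    using beta0_squared[OF assms(1,2)] assms(1) by (metis diff_gt_0_iff_gt mult_strict_left_mono)
  then show ?thesis using assms(3) by (simp add: field_simps)
qed

theorem mainTheorem8:
  fixes b1 b2 :: real
  assumes "b1 > 0" and "3 * b1 + b2 < 0" and "6 * b1 + b2 > 0"
  defines "g \<equiv> gmap b1 b2"
    and "um \<equiv> 1 - alpha0 b1 b2" and "u0 \<equiv> (1/2 :: real)" and "up \<equiv> alpha0 b1 b2"
  shows "(\<forall>\<delta>::real. g (up - \<delta>) + g (um + \<delta>) = 2 * u0)
    \<and> (deriv g u0 > 1 \<and> deriv g um = deriv g up \<and> deriv g up < 1)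
    \<and> (\<forall>p. um < p \<and> p < u0 \<longrightarrow> deriv (deriv g) p > 0)
    \<and> (\<forall>p. u0 < p \<and> p < up \<longrightarrow> deriv (deriv g) p < 0)"
proof -
  have b: "b1 > b2" using assms(1,2) by linarith
  have G1: "g (up - \<delta>) + g (um + \<delta>) = 2 * u0" for \<delta>
    using gmap_reflect[of b1 b2 "um + \<delta>"] unfolding g_def u0_def um_def up_def by simp
  have "b1 * (3*b1 + b2) / (b1 - b2) < 0"
    using assms(1,2) b by (simp add: divide_neg_pos mult_pos_neg)
  then have G2: "deriv g u0 > 1 \<and> deriv g um = deriv g up \<and> deriv g up < 1"
    using assms(2) deriv_gmap_alpha0[OF b assms(2)] deriv_gmap_reflect[of b1 b2 "alpha0 b1 b2"]
    unfolding g_def u0_def um_def up_def deriv_gmap_center by simp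
  have "\<bar>p - 1/2\<bar> < beta0 b1 b2" if "um < p" "p < up" for p
    using that unfolding um_def up_def alpha0_def by auto
  then have "6*(b1 + b2) + 40*(b1 - b2) * (p - 1/2)^2 < 0" if "um < p" "p < up" for p
    using curvature_factor_neg[OF b assms(2,3)] that by blast
  moreover have "um < u0" "u0 < up"
    using beta0_pos[OF b assms(2)] unfolding um_def u0_def up_def alpha0_def by auto
  ultimately show ?thesis
    using G1 G2 unfolding g_def deriv_deriv_gmap u0_def
    by (auto simp: mult_neg_neg mult_pos_neg)
qed

end
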